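(* For every $\varepsilon\in(0,\frac12]$ there exists a non-negative integer $\kappa\in\widetilde O(1/\varepsilon)$ such that for every protocol $\Pi=(\mathsf A,\mathsf B)$, either $\mathrm{val}(\mathsf A^{(\kappa)}_\Pi,\mathsf B)>1-\varepsilon$ or $\mathrm{val}(\mathsf A,\mathsf B^{(\kappa)}_\Pi)<\varepsilon$.
   Context: An $m$-round protocol $\Pi=(\mathsf A,\mathsf B)$ (no inputs, single-bit messages, parties possibly computationally unbounded) is identified with the complete binary tree of height $m$: nodes are binary strings of length at most $m$, the root is the empty string $\lambda$, the children of $u$ are $u0,u1$, and leaves are strings of length $m$. A control scheme assigns each non-leaf node to the party sending the next bit; $e_\Pi(u,ub)$ is the probability that the next bit is $b$ given transcript $u$; $\chi_\Pi$ maps each leaf to the parties' common output in $\{0,1\}$; $L_\Pi$ is the distribution of the leaf reached in a random execution, and $\mathrm{val}(\Pi)=\mathbb E_{\ell\leftarrow L_\Pi}[\chi_\Pi(\ell)]$. Recursive biased-continuation attackers: $\mathsf A^{(0)}_\Pi=\mathsf A$; for $i>0$, $\mathsf A^{(i)}_\Pi$ on an $\mathsf A$-controlled transcript $u$ samples a leaf $\ell\leftarrow L_{(\mathsf A^{(i-1)}_\Pi,\mathsf B)}$ conditioned on $\ell$ having prefix $u$ and $\chi_\Pi(\ell)=1$ (if no such leaf has positive probability, an arbitrary leaf extending $u$), and sends $\ell_{|u|+1}$; at a leaf it outputs $\chi_\Pi$ of that leaf. Analogously $\mathsf B^{(0)}_\Pi=\mathsf B$ and $\mathsf B^{(i)}_\Pi$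 on $\mathsf B$-controlled $u$ samples $\ell\leftarrow L_{(\mathsf A,\mathsf B^{(i-1)}_\Pi)}$ conditioned on prefix $u$ and $\chi_\Pi(\ell)=0$, and sends $\ell_{|u|+1}$. $\mathrm{val}(\mathsf A',\mathsf B')$ denotes the value of the protocol in which $\mathsf A',\mathsf B'$ take the roles of $\mathsf A,\mathsf B$ (same control scheme and output function). *)

theory Defs
  imports Complex_Main "HOL-Library.Sublist"
begin

text \<open>A protocol of height m is identified with the complete binary tree of height m.
  Nodes/transcripts are bool lists. A protocol is given by
   ctrl :: bool list \<Rightarrow> bool   (True = node controlled by A, False = by B),
   e :: bool list \<Rightarrow> real      (e u = probability that the next bit is True given u),
   chi :: bool list \<Rightarrow> bool    (common output at leaves).\<close>

definition wf_protocol :: "nat \<Rightarrow> (bool list \<Rightarrow> real) \<Rightarrow> bool" where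
  "wf_protocol m e \<longleftrightarrow> (\<forall>u. length u < m \<longrightarrow> 0 \<le> e u \<and> e u \<le> 1)"

definition leaf_prob :: "nat \<Rightarrow> (bool list \<Rightarrow> real) \<Rightarrow> bool list \<Rightarrow> real" where
  "leaf_prob m e l = (\<Prod>i<m. if l ! i then e (take i l) else 1 - e (take i l))"

definition prob_ev :: "nat \<Rightarrow> (bool list \<Rightarrow> real) \<Rightarrow> (bool list \<Rightarrow> bool) \<Rightarrow> real" where
  "prob_ev m e P = (\<Sum>l\<in>{l. length l = m \<and> P l}. leaf_prob m e l)"

definition val :: "nat \<Rightarrow> (bool list \<Rightarrow> real) \<Rightarrow> (bool list \<Rightarrow> bool) \<Rightarrow> real" where
  "val m e chi = prob_ev m e chi"

text \<open>One biased-continuation step. e is the joint edge function of the current pair of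
  parties; at nodes controlled by the attacking party (ctrl u = side) the next bit is drawn
  from a leaf sampled from L_e conditioned on prefix u and chi = target; if that event has
  probability 0, the arbitrary fallback fb u (probability of sending True) is used.\<close>
definition bc_step :: "nat \<Rightarrow> (bool list \<Rightarrow> bool) \<Rightarrow> bool \<Rightarrow> (bool list \<Rightarrow> bool) \<Rightarrow> bool
    \<Rightarrow> (bool list \<Rightarrow> real) \<Rightarrow> (bool list \<Rightarrow> real) \<Rightarrow> (bool list \<Rightarrow> real) \<Rightarrow> bool list \<Rightarrow> real" where
  "bc_step m ctrl side chi target e0 fb e u =
     (if ctrl u = side then
        (let d = prob_ev m e (\<lambda>l. prefix u l \<and> chi l = target) in
         if d > 0 then prob_ev m e (\<lambda>l. prefix (u @ [True]) l \<and> chi l = target) / d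
         else fb u)
      else e0 u)"

text \<open>Joint edge function of (A^(i), B): attacker side True, target output 1.
  fb i is the arbitrary fallback used by the i-th level attacker.\<close>
fun edgesA :: "nat \<Rightarrow> (bool list \<Rightarrow> bool) \<Rightarrow> (bool list \<Rightarrow> real) \<Rightarrow> (bool list \<Rightarrow> bool)
    \<Rightarrow> (nat \<Rightarrow> bool list \<Rightarrow> real) \<Rightarrow> nat \<Rightarrow> bool list \<Rightarrow> real" where
  "edgesA m ctrl e chi fb 0 = e"
| "edgesA m ctrl e chi fb (Suc i) =
     bc_step m ctrl True chi True e (fb (Suc i)) (edgesA m ctrl e chi fb i)"

text \<open>Joint edge function of (A, B^(i)): attacker side False (B), target output 0.\<close>
fun edgesB :: "nat \<Rightarrow> (bool list \<Rightarrow> bool) \<Rightarrow> (bool list \<Rightarrow> real) \<Rightarrow> (bool list \<Rightarrow> bool)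
    \<Rightarrow> (nat \<Rightarrow> bool list \<Rightarrow> real) \<Rightarrow> nat \<Rightarrow> bool list \<Rightarrow> real" where
  "edgesB m ctrl e chi fb 0 = e"
| "edgesB m ctrl e chi fb (Suc i) =
     bc_step m ctrl False chi False e (fb (Suc i)) (edgesB m ctrl e chi fb i)"

end

theory Submission
  imports Defs "HOL-Analysis.Analysis"
begin

text \<open>Following Haitner and Omri, put n = \<kappa> + 1 and let P(u) be the product, over the attackers
  A^(0), ..., A^(\<kappa>), of the conditional probabilities of output 1 given that the execution passes through
  the node u; let Q(u) be the analogous product for B^(0), ..., B^(\<kappa>) and output 0. A biased-continuation
  step multiplies the attacker's edge probability by the ratio of the value at the child to the value
  at the node, so the products telescope: at a node of A, P is averaged with the honest edge probabilities
  like a value, while each factor of Q is averaged separately (and symmetrically at nodes of B).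
  Superadditivity of the geometric mean and convexity of a decreasing curve gam n then show, by induction
  from the leaves, that (P(u), Q(u)) stays in the region gam n (H^(1/n)) \<le> G, which avoids the square
  [0, 1/(n+1))^2. Values only grow along the attackers, so if both attacks failed, both products at the
  root would be at most (1 - \<epsilon>)^n < 1/(n+1).\<close>

section \<open>Convexity and the geometric mean\<close>

lemma chord_above_supporting_line:
  fixes f :: "real \<Rightarrow> real"
  assumes "x < b" "b < y"
    and sx: "f b + m * (x - b) \<le> f x" and sy: "f b + m * (y - b) \<le> f y"
  shows "(f b - f x) * (y - x) \<le> (f y - f x) * (b - x)"
proof -
  have "(f b - f x) * (y - x) = (f b - f x) * (y - b) + (f b - f x) * (b - x)"
    by (simp add: algebra_simps)
  also have "\<dots> \<le> (m * (b - x)) * (y - b) + (f b - f x) * (b - x)"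
    using sx assms(2) by (intro add_right_mono mult_right_mono) (auto simp: algebra_simps)
  also have "\<dots> = (m * (y - b)) * (b - x) + (f b - f x) * (b - x)"
    by (simp add: algebra_simps)
  also have "\<dots> \<le> (f y - f b) * (b - x) + (f b - f x) * (b - x)"
    using sy assms(1) by (intro add_right_mono mult_right_mono) auto
  also have "\<dots> = (f y - f x) * (b - x)"
    by (simp add: algebra_simps)
  finally show ?thesis .
qed

lemma chord_ge_across_junction:
  fixes f :: "real \<Rightarrow> real"
  assumes left: "convex_on {x..b} f" and right: "convex_on {b..y} f"
    and "x < b" "b < y" "x < z" "z < y"
    and chord: "(f b - f x) * (y - x) \<le> (f y - f x) * (b - x)"
  shows "f z \<le> (f y - f x) / (y - x) * (z - x) + f x"
proof (cases "z \<le> b")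
  case True
  then have "f z \<le> (f b - f x) / (b - x) * (z - x) + f x"
    using convex_onD_Icc'[OF left] assms(5) by simp
  also have "\<dots> \<le> (f y - f x) / (y - x) * (z - x) + f x"
    using chord assms(3-6) by (intro add_right_mono mult_right_mono) (auto simp: divide_simps)
  finally show ?thesis .
next
  case False
  then have "f z \<le> (f b - f y) / (y - b) * (y - z) + f y"
    using convex_onD_Icc''[OF right] assms(6) by simp
  also have "\<dots> \<le> (f x - f y) / (y - x) * (y - z) + f y"
  proof -
    have "(f b - f y) * (y - x) \<le> (f x - f y) * (y - b)"
      using chord by (simp add: algebra_simps)
    then show ?thesis
      using assms(3-6) by (intro add_right_mono mult_right_mono) (auto simp: divide_simps)
  qed
  also have "\<dots> = (f y - f x) / (y - x) * (z - x) + f x"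
    using assms(3,4) by (simp add: field_simps)
  finally show ?thesis .
qed

lemma convex_on_Icc_join:
  fixes f :: "real \<Rightarrow> real"
  assumes left: "convex_on {a..b} f" and right: "convex_on {b..c} f"
    and support: "\<And>y. y \<in> {a..c} \<Longrightarrow> f b + m * (y - b) \<le> f y"
  shows "convex_on {a..c} f"
proof (rule convex_on_linorderI)
  fix t x y :: real
  assume t: "0 < t" "t < 1" and x: "x \<in> {a..c}" and y: "y \<in> {a..c}" and "x < y"
  define z where "z = (1 - t) * x + t * y"
  have "z - x = t * (y - x)" "y - z = (1 - t) * (y - x)"
    by (simp_all add: z_def algebra_simps)
  then have z: "x < z" "z < y"
    using t \<open>x < y\<close> by (metis diff_gt_0_iff_gt mult_pos_pos)+
  have "f z \<le> (f y - f x) / (y - x) * (z - x) + f x"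
  proof (cases "y \<le> b \<or> b \<le> x")
    case True
    then have "convex_on {x..y} f"
      using x y by (auto intro: convex_on_subset[OF left] convex_on_subset[OF right])
    then show ?thesis using convex_onD_Icc'[of x y f z] z by simp
  next
    case False
    then have "x < b" "b < y" by auto
    moreover have "convex_on {x..b} f" "convex_on {b..y} f"
      using x y by (auto intro: convex_on_subset[OF left] convex_on_subset[OF right])
    ultimately show ?thesis
      using chord_ge_across_junction z chord_above_supporting_line support x y by blast
  qed
  also have "\<dots> = (1 - t) * f x + t * f y"
    using \<open>x < y\<close> by (simp add: z_def field_simps)
  finally show "f ((1 - t) *\<^sub>R x + t *\<^sub>R y) \<le> (1 - t) * f x + t * f y"
    by (simp add: z_def)
qed simp

lemma convex_on_cong:
  assumes "convex_on A f" "\<And>x. x \<in> A \<Longrightarrow> f x = g x"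
  shows "convex_on A g"
  using assms unfolding convex_on_def by (auto simp: convexD)

lemma root_prod_add_ge:
  fixes x y :: "'i \<Rightarrow> real"
  assumes "finite I" "I \<noteq> {}" and x: "\<And>i. i \<in> I \<Longrightarrow> 0 \<le> x i" and y: "\<And>i. i \<in> I \<Longrightarrow> 0 \<le> y i"
  shows "root (card I) (\<Prod>i\<in>I. x i) + root (card I) (\<Prod>i\<in>I. y i) \<le> root (card I) (\<Prod>i\<in>I. x i + y i)"
proof (cases "\<exists>i\<in>I. x i + y i = 0")
  case True
  then obtain i where "i \<in> I" "x i = 0" "y i = 0" using x y by (metis add_nonneg_eq_0_iff)
  then have "prod x I = 0" "prod y I = 0" "(\<Prod>i\<in>I. x i + y i) = 0"
    using assms(1) \<open>i \<in> I\<close> by (auto intro!: prod_zero bexI[of _ i])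
  then show ?thesis by simp
next
  case False
  let ?n = "card I" and ?s = "\<lambda>i. x i + y i"
  have s: "0 < ?s i" if "i \<in> I" for i using False x[OF that] y[OF that] that by fastforce
  have n: "0 < ?n" using assms by (simp add: card_gt_0_iff)
  have geom_arith: "root ?n (\<Prod>i\<in>I. z i / ?s i) \<le> (\<Sum>i\<in>I. z i / ?s i / ?n)"
    if "\<And>i. i \<in> I \<Longrightarrow> 0 \<le> z i" for z
    using arith_geom_mean[OF assms(1,2), of "\<lambda>i. z i / ?s i"] that s n
    by (simp add: root_powr_inverse prod_nonneg less_imp_le)
  have "(\<Sum>i\<in>I. x i / ?s i / ?n) + (\<Sum>i\<in>I. y i / ?s i / ?n) = (\<Sum>i\<in>I. 1 / ?n)"
    unfolding sum.distrib[symmetric] using s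
    by (intro sum.cong) (auto simp: add_divide_distrib[symmetric] less_imp_neq[symmetric])
  then have "root ?n (\<Prod>i\<in>I. x i / ?s i) + root ?n (\<Prod>i\<in>I. y i / ?s i) \<le> 1"
    using geom_arith[of x, OF x] geom_arith[of y, OF y] n by simp
  moreover have "0 < root ?n (\<Prod>i\<in>I. ?s i)" using s n by (simp add: prod_pos)
  ultimately show ?thesis
    by (simp add: prod_dividef real_root_divide add_divide_distrib[symmetric] divide_le_eq)
qed

section \<open>The curve gam and its region\<close>

lemma power_branch_has_derivative:
  fixes a y :: real
  assumes "0 < n"
  shows "((\<lambda>y. (a * (1 - y ^ n)) ^ n) has_real_derivative
           - (real n ^ 2 * a ^ n * (y - y ^ Suc n) ^ (n - 1))) (at y)"
proof -
  obtain k where n: "n = Suc k" using assms by (cases n) auto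
  have "((\<lambda>y. (a * (1 - y ^ n)) ^ n) has_real_derivative
          real n * (a * (1 - y ^ n)) ^ (n - 1) * (a * (0 - real n * y ^ (n - 1)))) (at y)"
    by (intro derivative_eq_intros) auto
  moreover have "real n * (a * (1 - y ^ n)) ^ (n - 1) * (a * (0 - real n * y ^ (n - 1)))
      = - (real n ^ 2 * a ^ n * ((1 - y ^ n) * y) ^ (n - 1))"
    by (simp only: power_mult_distrib n diff_Suc_1 power_Suc) (simp add: algebra_simps power2_eq_square)
  moreover have "(1 - y ^ n) * y = y - y ^ Suc n"
    by (simp add: algebra_simps)
  ultimately show ?thesis by simp
qed

text \<open>With a = gam_scale n, on [gam_knot n, 1] the curve is the convex branch h \<mapsto> (a (1 - h^n))^n; below the knot it continues
  with the tangent line, which passes through (0, 1). Under (G, H) = (g^n, h^n) the branch and the line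
  are mirror images of each other, which makes gam_region symmetric.\<close>

definition gam_knot :: "nat \<Rightarrow> real" where
  "gam_knot n = root n (1 / (real n + 1))"

definition gam_scale :: "nat \<Rightarrow> real" where
  "gam_scale n = gam_knot n * (real n + 1) / real n"

definition gam :: "nat \<Rightarrow> real \<Rightarrow> real" where
  "gam n h = (if h \<le> gam_knot n then 1 - h / gam_scale n else (gam_scale n * (1 - h ^ n)) ^ n)"

lemma gam_knot_facts:
  assumes "0 < n"
  shows "0 < gam_knot n" "gam_knot n < 1" "gam_knot n ^ n = 1 / (real n + 1)" "0 < gam_scale n"
    "gam_scale n * (1 - 1 / (real n + 1)) = gam_knot n" "1 - gam_knot n / gam_scale n = 1 / (real n + 1)"
proof -
  show "0 < gam_knot n" "gam_knot n < 1" "gam_knot n ^ n = 1 / (real n + 1)"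
    using assms by (simp_all add: gam_knot_def)
  then show a: "0 < gam_scale n" using assms by (simp add: gam_scale_def)
  have "1 - 1 / (real n + 1) = real n / (real n + 1)" by (simp add: field_simps)
  then show "gam_scale n * (1 - 1 / (real n + 1)) = gam_knot n"
    using assms by (simp add: gam_scale_def)
  then show "1 - gam_knot n / gam_scale n = 1 / (real n + 1)"
    using a by (simp add: field_simps)
qed

lemma gam_branch_derivative_mono:
  assumes "0 < n" "gam_knot n \<le> y" "y \<le> z" "z \<le> 1"
  shows "- (real n ^ 2 * gam_scale n ^ n * (y - y ^ Suc n) ^ (n - 1))
           \<le> - (real n ^ 2 * gam_scale n ^ n * (z - z ^ Suc n) ^ (n - 1))"
proof -
  note knot = gam_knot_facts[OF assms(1)]
  have "z - z ^ Suc n \<le> y - y ^ Suc n"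
  proof (rule DERIV_nonpos_imp_nonincreasing[OF \<open>y \<le> z\<close>])
    fix w assume w: "y \<le> w" "w \<le> z"
    have "1 / (real n + 1) \<le> w ^ n"
      using knot assms w by (metis order.trans less_imp_le power_mono)
    then have "1 - real (Suc n) * w ^ n \<le> 0"
      by (simp add: field_simps)
    moreover have "((\<lambda>w. w - w ^ Suc n) has_real_derivative 1 - real (Suc n) * w ^ n) (at w)"
      using DERIV_diff[OF DERIV_ident DERIV_pow[of "Suc n"]] by simp
    ultimately show "\<exists>d. ((\<lambda>w. w - w ^ Suc n) has_real_derivative d) (at w) \<and> d \<le> 0"
      by blast
  qed
  moreover have "0 \<le> z - z ^ Suc n"
    using knot assms by (simp add: power_le_one)
  ultimately show ?thesis
    using knot by (intro le_imp_neg_le mult_left_mono power_mono) auto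
qed

lemma gam_branch_derivative_at_knot:
  assumes "0 < n"
  shows "- (real n ^ 2 * gam_scale n ^ n * (gam_knot n - gam_knot n ^ Suc n) ^ (n - 1))
           = - 1 / gam_scale n"
proof -
  obtain k where n: "n = Suc k" using assms by (cases n) auto
  define x a where "x = gam_knot n" and "a = gam_scale n"
  note knot = gam_knot_facts[OF assms, folded x_def a_def]
  have "x - x ^ Suc n = x * (1 - 1 / (real n + 1))"
    using knot by (simp add: algebra_simps)
  also have "1 - 1 / (real n + 1) = x / a"
    using knot by (simp add: field_simps)
  finally have slope: "x - x ^ Suc n = x * x / a" by simp
  have "real n * a * x ^ k = (real n + 1) * x ^ n"
    using assms by (simp add: a_def x_def gam_scale_def n)
  then have one: "real n * a * x ^ k = 1"
    using knot by simp
  have "real n ^ 2 * a ^ n * (x - x ^ Suc n) ^ (n - 1) = real n ^ 2 * a ^ Suc k * (x * x / a) ^ k"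
    unfolding slope by (simp add: n)
  also have "\<dots> = (real n * a * x ^ k) ^ 2 / a"
    using knot(4) by (simp add: power2_eq_square field_simps)
  finally show ?thesis
    unfolding one x_def[symmetric] a_def[symmetric] by simp
qed

lemma gam_branch_above_tangent:
  assumes "0 < n" "gam_knot n \<le> y" "y \<le> 1"
  shows "1 / (real n + 1) - (y - gam_knot n) / gam_scale n \<le> (gam_scale n * (1 - y ^ n)) ^ n"
proof -
  note knot = gam_knot_facts[OF assms(1)]
  define \<phi> where "\<phi> y = (gam_scale n * (1 - y ^ n)) ^ n + y / gam_scale n" for y
  have "\<phi> (gam_knot n) \<le> \<phi> y"
  proof (rule DERIV_nonneg_imp_nondecreasing[OF assms(2)])
    fix w assume w: "gam_knot n \<le> w" "w \<le> y"
    have "(\<phi> has_real_derivative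
        - (real n ^ 2 * gam_scale n ^ n * (w - w ^ Suc n) ^ (n - 1)) + 1 / gam_scale n) (at w)"
      unfolding \<phi>_def using knot
      by (intro DERIV_add power_branch_has_derivative[OF assms(1)]) (auto intro!: derivative_eq_intros)
    moreover have "- 1 / gam_scale n \<le> - (real n ^ 2 * gam_scale n ^ n * (w - w ^ Suc n) ^ (n - 1))"
      using gam_branch_derivative_mono[OF assms(1) order.refl, of w] w assms
      unfolding gam_branch_derivative_at_knot[OF assms(1)] by simp
    ultimately show "\<exists>d. (\<phi> has_real_derivative d) (at w) \<and> 0 \<le> d"
      by (intro exI conjI) auto
  qed
  moreover have "(gam_scale n * (1 - gam_knot n ^ n)) ^ n = 1 / (real n + 1)"
    using knot by simp
  ultimately show ?thesis
    unfolding \<phi>_def by (simp add: diff_divide_distrib)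
qed

lemma gam_knot_value:
  assumes "0 < n"
  shows "gam n (gam_knot n) = 1 / (real n + 1)"
  using gam_knot_facts[OF assms] by (simp add: gam_def)

lemma convex_on_gam:
  assumes "0 < n"
  shows "convex_on {0..1} (gam n)"
proof (rule convex_on_Icc_join)
  note knot = gam_knot_facts[OF assms]
  show "convex_on {0..gam_knot n} (gam n)"
  proof (rule convex_on_linorderI)
    fix t x y :: real
    assume "0 < t" "t < 1" "x \<in> {0..gam_knot n}" "y \<in> {0..gam_knot n}"
    moreover have "(1 - t) * x + t * y \<le> (1 - t) * gam_knot n + t * gam_knot n"
      using calculation by (intro add_mono mult_left_mono) auto
    ultimately show "gam n ((1 - t) *\<^sub>R x + t *\<^sub>R y) \<le> (1 - t) * gam n x + t * gam n y"
      using knot(4) by (simp add: gam_def field_simps)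
  qed simp
  have "convex_on {gam_knot n..1} (\<lambda>y. (gam_scale n * (1 - y ^ n)) ^ n)"
    by (rule convex_on_realI[OF _ power_branch_has_derivative[OF assms] gam_branch_derivative_mono[OF assms]])
      auto
  then show "convex_on {gam_knot n..1} (gam n)"
    by (rule convex_on_cong) (use knot in \<open>auto simp: gam_def\<close>)
  fix y :: real assume y: "y \<in> {0..1}"
  show "gam n (gam_knot n) + - 1 / gam_scale n * (y - gam_knot n) \<le> gam n y"
  proof (cases "y \<le> gam_knot n")
    case True
    then show ?thesis using knot(4) by (simp add: gam_def field_simps)
  next
    case False
    have "gam n (gam_knot n) + - 1 / gam_scale n * (y - gam_knot n)
        = 1 / (real n + 1) - (y - gam_knot n) / gam_scale n"
      by (simp add: gam_knot_value[OF assms])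
    also have "\<dots> \<le> gam n y"
      using gam_branch_above_tangent[OF assms, of y] False y by (simp add: gam_def)
    finally show ?thesis .
  qed
qed

lemma gam_antimono:
  assumes "0 < n" "0 \<le> h" "h \<le> h'" "h' \<le> 1"
  shows "gam n h' \<le> gam n h"
proof -
  note knot = gam_knot_facts[OF assms(1)]
  have branch: "(gam_scale n * (1 - z ^ n)) ^ n \<le> (gam_scale n * (1 - y ^ n)) ^ n"
    if "0 \<le> y" "y \<le> z" "z \<le> 1" for y z
    using that knot power_le_one[of z n] by (intro power_mono mult_left_mono) (auto intro: power_mono)
  consider "h' \<le> gam_knot n" | "h \<le> gam_knot n" "gam_knot n < h'" | "gam_knot n < h"
    using assms by linarith
  then show ?thesis
  proof cases
    case 1
    then show ?thesis using assms knot by (simp add: gam_def divide_right_mono)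
  next
    case 2
    have "gam n h' \<le> gam n (gam_knot n)"
      using branch[of "gam_knot n" h'] 2 assms knot by (simp add: gam_def)
    also have "\<dots> \<le> gam n h"
    proof -
      have "h / gam_scale n \<le> gam_knot n / gam_scale n"
        using 2 knot by (intro divide_right_mono) auto
      then show ?thesis using 2 by (simp add: gam_def)
    qed
    finally show ?thesis .
  next
    case 3
    then show ?thesis using branch[of h h'] assms by (simp add: gam_def)
  qed
qed

lemma gam_0: "0 < n \<Longrightarrow> gam n 0 = 1"
  using gam_knot_facts[of n] by (simp add: gam_def)

lemma gam_1: "0 < n \<Longrightarrow> gam n 1 = 0"
  using gam_knot_facts[of n] by (simp add: gam_def)

definition gam_region :: "nat \<Rightarrow> real \<Rightarrow> real \<Rightarrow> bool" where
  "gam_region n G H \<longleftrightarrow> 0 \<le> G \<and> G \<le> 1 \<and> 0 \<le> H \<and> H \<le> 1 \<and> gam n (root n H) \<le> G"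

lemma root_unit_interval:
  assumes "0 < n" "0 \<le> G" "G \<le> 1"
  shows "0 \<le> root n G" "root n G \<le> 1" "root n G ^ n = G"
  using assms by (simp_all add: real_root_ge_zero)

lemma root_le_gam_knot_iff:
  "0 < n \<Longrightarrow> root n G \<le> gam_knot n \<longleftrightarrow> G \<le> 1 / (real n + 1)"
  by (simp add: gam_knot_def)

lemma gam_le_iff:
  assumes n: "0 < n" and h: "0 \<le> h" "h \<le> 1" and G: "0 \<le> G" "G \<le> 1"
  shows "gam n h \<le> G \<longleftrightarrow> (h \<le> gam_knot n \<longrightarrow> gam_scale n * (1 - G) \<le> h)
                      \<and> (gam_knot n < h \<longrightarrow> gam_scale n * (1 - h ^ n) \<le> root n G)"
proof (cases "h \<le> gam_knot n")
  case True
  then show ?thesis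
    using gam_knot_facts(4)[OF n] by (auto simp: gam_def field_simps)
next
  case False
  have "0 \<le> gam_scale n * (1 - h ^ n)"
    using gam_knot_facts(4)[OF n] h by (simp add: power_le_one)
  from power_mono_iff[OF this real_root_ge_zero[where n = n, OF G(1)] n]
  have "(gam_scale n * (1 - h ^ n)) ^ n \<le> G \<longleftrightarrow> gam_scale n * (1 - h ^ n) \<le> root n G"
    using n G by simp
  then show ?thesis
    using False n G by (simp add: gam_def)
qed

lemma gam_region_sym:
  assumes n: "0 < n" and R: "gam_region n G H"
  shows "gam_region n H G"
proof -
  define x a g h where "x = gam_knot n" and "a = gam_scale n" and "g = root n G" and "h = root n H"
  note knot = gam_knot_facts[OF n, folded x_def a_def]
  have G: "0 \<le> G" "G \<le> 1" and H: "0 \<le> H" "H \<le> 1"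
    using R by (auto simp: gam_region_def)
  note g = root_unit_interval[OF n G, folded g_def] and h = root_unit_interval[OF n H, folded h_def]
  have gx: "g \<le> x \<longleftrightarrow> a * (1 - 1 / (real n + 1)) \<le> a * (1 - G)"
    using root_le_gam_knot_iff[OF n] knot(4) by (simp add: g_def x_def)
  have "gam n h \<le> G"
    using R by (simp add: gam_region_def h_def)
  then have hyp: "(h \<le> x \<longrightarrow> a * (1 - G) \<le> h) \<and> (x < h \<longrightarrow> a * (1 - H) \<le> g)"
    using gam_le_iff[OF n h(1,2) G] h(3) by (simp add: x_def a_def g_def)
  have "(g \<le> x \<longrightarrow> a * (1 - H) \<le> g) \<and> (x < g \<longrightarrow> a * (1 - G) \<le> h)"
  proof (intro conjI impI)
    assume "x < g"
    then show "a * (1 - G) \<le> h"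
      using hyp gx knot(5) by (cases "h \<le> x") auto
  next
    assume "g \<le> x"
    show "a * (1 - H) \<le> g"
    proof (cases "h \<le> x")
      case True
      then have "h = x" and "a * (1 - G) = a * (1 - 1 / (real n + 1))"
        using hyp gx \<open>g \<le> x\<close> knot(5) by auto
      then have "g = x" "H = 1 / (real n + 1)"
        using knot(3,4) h(3) by (auto simp: g_def x_def gam_knot_def)
      then show ?thesis using knot(5) by simp
    qed (use hyp in auto)
  qed
  then have "gam n g \<le> H"
    using gam_le_iff[OF n g(1,2) H] g(3) by (simp add: x_def a_def h_def)
  then show ?thesis
    using G H by (simp add: gam_region_def g_def)
qed

lemma gam_region_threshold:
  assumes n: "0 < n" and R: "gam_region n G H"
  shows "1 / (real n + 1) \<le> G \<or> 1 / (real n + 1) \<le> H"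
proof -
  define h where "h = root n H"
  note knot = gam_knot_facts[OF n]
  have H: "0 \<le> H" "H \<le> 1" and gam_h: "gam n h \<le> G"
    using R by (auto simp: gam_region_def h_def)
  show ?thesis
  proof (cases "h \<le> gam_knot n")
    case True
    have "h / gam_scale n \<le> gam_knot n / gam_scale n"
      using True knot by (intro divide_right_mono) auto
    then show ?thesis using True gam_h knot by (simp add: gam_def)
  next
    case False
    then show ?thesis
      using root_le_gam_knot_iff[OF n, of H] by (simp add: h_def)
  qed
qed

lemma gam_region_one_left: "0 < n \<Longrightarrow> 0 \<le> H \<Longrightarrow> H \<le> 1 \<Longrightarrow> gam_region n 1 H"
  using gam_antimono[of n 0 "root n H"] gam_0[of n] by (simp add: gam_region_def real_root_ge_zero)

lemma gam_region_one_right: "0 < n \<Longrightarrow> 0 \<le> G \<Longrightarrow> G \<le> 1 \<Longrightarrow> gam_region n G 1"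
  using gam_1[of n] by (simp add: gam_region_def)

lemma convex_comb_unit_interval:
  fixes t x y :: real
  assumes "0 \<le> t" "t \<le> 1" "0 \<le> x" "x \<le> 1" "0 \<le> y" "y \<le> 1"
  shows "0 \<le> t * x + (1 - t) * y" "t * x + (1 - t) * y \<le> 1"
  using assms by (simp_all add: convex_bound_le)

text \<open>At a node of the attacker A the first coordinate is averaged linearly and the second one factor by
  factor; superadditivity of the geometric mean and convexity of gam absorb the difference.\<close>

lemma gam_region_mix:
  assumes n: "0 < n" and p: "0 \<le> p" "p \<le> 1"
    and R1: "gam_region n G1 (\<Prod>k<n. \<beta> k)" and R0: "gam_region n G0 (\<Prod>k<n. \<gamma> k)"
    and \<beta>: "\<And>k. 0 \<le> \<beta> k \<and> \<beta> k \<le> 1" and \<gamma>: "\<And>k. 0 \<le> \<gamma> k \<and> \<gamma> k \<le> 1"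
  shows "gam_region n (p * G1 + (1 - p) * G0) (\<Prod>k<n. p * \<beta> k + (1 - p) * \<gamma> k)"
proof -
  define h1 h0 h where "h1 = root n (\<Prod>k<n. \<beta> k)" and "h0 = root n (\<Prod>k<n. \<gamma> k)"
    and "h = root n (\<Prod>k<n. p * \<beta> k + (1 - p) * \<gamma> k)"
  have G1: "0 \<le> G1" "G1 \<le> 1" "gam n h1 \<le> G1" and G0: "0 \<le> G0" "G0 \<le> 1" "gam n h0 \<le> G0"
    using R1 R0 by (auto simp: gam_region_def h1_def h0_def)
  have mix: "0 \<le> p * \<beta> k + (1 - p) * \<gamma> k \<and> p * \<beta> k + (1 - p) * \<gamma> k \<le> 1" for k
    using convex_comb_unit_interval[OF p] \<beta> \<gamma> by blast
  have h1: "0 \<le> h1" "h1 \<le> 1" and h0: "0 \<le> h0" "h0 \<le> 1" and h: "h \<le> 1"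
    using \<beta> \<gamma> mix n by (auto simp: h1_def h0_def h_def real_root_ge_zero prod_nonneg prod_le_1)
  have "p * h1 + (1 - p) * h0
      = root n (\<Prod>k<n. p * \<beta> k) + root n (\<Prod>k<n. (1 - p) * \<gamma> k)"
    using p n by (simp add: h1_def h0_def prod.distrib real_root_mult real_root_power_cancel)
  also have "\<dots> \<le> h"
    using root_prod_add_ge[of "{..<n}" "\<lambda>k. p * \<beta> k" "\<lambda>k. (1 - p) * \<gamma> k"] n p \<beta> \<gamma>
    by (simp add: h_def lessThan_empty_iff)
  finally have "gam n h \<le> gam n (p * h1 + (1 - p) * h0)"
    using h1 h0 h p n by (intro gam_antimono) auto
  also have "\<dots> \<le> p * gam n h1 + (1 - p) * gam n h0"
    using convex_onD[OF convex_on_gam[OF n], of "1 - p" h1 h0] p h1 h0 by simp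
  also have "\<dots> \<le> p * G1 + (1 - p) * G0"
    using G1 G0 p by (intro add_mono mult_left_mono) auto
  finally show ?thesis
    using convex_comb_unit_interval[OF p] G1 G0 mix by (auto simp: gam_region_def h_def prod_nonneg prod_le_1)
qed

section \<open>Conditional values in the protocol tree\<close>

lemma tree_induct [case_names leaf node]:
  assumes leaf: "\<And>u. m \<le> length u \<Longrightarrow> Q u"
    and node: "\<And>u. length u < m \<Longrightarrow> Q (u @ [True]) \<Longrightarrow> Q (u @ [False]) \<Longrightarrow> Q u"
  shows "Q u"
proof (induction "m - length u" arbitrary: u)
  case 0
  then have "m \<le> length u" by simp
  then show ?case by (rule leaf)
next
  case (Suc d)
  show ?case by (rule node) (use Suc in auto)
qed

definition edge :: "(bool list \<Rightarrow> real) \<Rightarrow> bool list \<Rightarrow> bool \<Rightarrow> real" where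
  "edge E u b = (if b then E u else 1 - E u)"

definition reach :: "(bool list \<Rightarrow> real) \<Rightarrow> bool list \<Rightarrow> real" where
  "reach E u = (\<Prod>i<length u. edge E (take i u) (u ! i))"

lemma reach_Nil [simp]: "reach E [] = 1"
  by (simp add: reach_def)

lemma reach_snoc: "reach E (u @ [b]) = reach E u * edge E u b"
proof -
  have "reach E (u @ [b]) = (\<Prod>i<length u. edge E (take i u) (u ! i)) * edge E u b"
    by (simp add: reach_def nth_append)
  then show ?thesis by (simp add: reach_def)
qed

lemma leaf_prob_eq_reach: "length l = m \<Longrightarrow> leaf_prob m E l = reach E l"
  by (simp add: leaf_prob_def reach_def edge_def)

lemma edge_unit_interval: "wf_protocol m E \<Longrightarrow> length u < m \<Longrightarrow> 0 \<le> edge E u b \<and> edge E u b \<le> 1"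
  by (auto simp: wf_protocol_def edge_def)

function node_val :: "nat \<Rightarrow> (bool list \<Rightarrow> real) \<Rightarrow> (bool list \<Rightarrow> bool) \<Rightarrow> bool list \<Rightarrow> real" where
  "node_val m E P u =
     (if length u < m then E u * node_val m E P (u @ [True]) + (1 - E u) * node_val m E P (u @ [False])
      else if P u then 1 else 0)"
  by pat_completeness auto
termination by (relation "Wellfounded.measure (\<lambda>(m, E, P, u). m - length u)") simp_all

declare node_val.simps [simp del]

lemma node_val_leaf: "m \<le> length u \<Longrightarrow> node_val m E P u = (if P u then 1 else 0)"
  by (subst node_val.simps) simp

lemma node_val_node:
  "length u < m \<Longrightarrow> node_val m E P u = E u * node_val m E P (u @ [True]) + (1 - E u) * node_val m E P (u @ [False])"
  by (subst node_val.simps) simp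

lemma prob_ev_prefix:
  assumes "length u \<le> m"
  shows "prob_ev m E (\<lambda>l. prefix u l \<and> P l) = reach E u * node_val m E P u"
  using assms
proof (induction u rule: tree_induct[where m = m])
  case (leaf u)
  then have "{l. length l = m \<and> prefix u l \<and> P l} = (if P u then {u} else {})"
    by (auto simp: prefix_def)
  then show ?case using leaf by (simp add: prob_ev_def leaf_prob_eq_reach node_val_leaf)
next
  case (node u)
  let ?S = "\<lambda>v. {l. length l = m \<and> prefix v l \<and> P l}"
  have split: "?S u = ?S (u @ [True]) \<union> ?S (u @ [False])"
  proof (intro set_eqI iffI)
    fix l assume "l \<in> ?S u"
    then obtain z zs where "l = u @ z # zs" "length l = m" "P l"
      using node.hyps by (auto simp: prefix_def neq_Nil_conv)
    then show "l \<in> ?S (u @ [True]) \<union> ?S (u @ [False])" by (cases z) (auto simp: prefix_def)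
  qed (auto simp: prefix_def)
  have fin: "finite (?S v)" for v
    by (rule finite_subset[OF _ finite_lists_length_eq[of UNIV m]]) auto
  have "prob_ev m E (\<lambda>l. prefix u l \<and> P l)
      = prob_ev m E (\<lambda>l. prefix (u @ [True]) l \<and> P l) + prob_ev m E (\<lambda>l. prefix (u @ [False]) l \<and> P l)"
    unfolding prob_ev_def split by (intro sum.union_disjoint fin) (auto simp: prefix_def)
  also have "\<dots> = reach E u * node_val m E P u"
    using node by (simp add: reach_snoc edge_def node_val_node algebra_simps)
  finally show ?case .
qed

lemma val_eq_node_val: "val m E chi = node_val m E chi []"
  using prob_ev_prefix[of "[]" m E chi] by (simp add: val_def)

lemma node_val_not: "node_val m E (\<lambda>l. \<not> P l) u = 1 - node_val m E P u"
proof (induction u rule: tree_induct[where m = m])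
  case (node u)
  then show ?case
    unfolding node_val_node[OF node(1)] node(2,3) by (simp add: algebra_simps)
qed (simp add: node_val_leaf)

lemma node_val_unit_interval:
  assumes "wf_protocol m E"
  shows "0 \<le> node_val m E P u \<and> node_val m E P u \<le> 1"
proof (induction u rule: tree_induct[where m = m])
  case (node u)
  then show ?case
    using assms convex_comb_unit_interval[of "E u"] by (simp add: node_val_node wf_protocol_def)
qed (simp add: node_val_leaf)

section \<open>Biased continuation\<close>

declare edgesA.simps(2) [simp del] edgesB.simps(2) [simp del]

lemma edgesB_eq_edgesA_dual: "edgesB m ctrl e chi f k = edgesA m (\<lambda>u. \<not> ctrl u) e (\<lambda>l. \<not> chi l) f k"
proof (induction k)
  case (Suc k)
  show ?case by (rule ext) (simp add: Suc edgesA.simps(2) edgesB.simps(2) bc_step_def Let_def)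
qed simp

lemma edgesA_other: "\<not> ctrl u \<Longrightarrow> edgesA m ctrl e chi f k u = e u"
  by (cases k) (simp_all add: edgesA.simps(2) bc_step_def)

lemma edgesA_Suc_attacker:
  fixes m k :: nat and e :: "bool list \<Rightarrow> real" and chi f
  assumes "ctrl u" "length u < m"
  defines "E \<equiv> edgesA m ctrl e chi f k"
  shows "edgesA m ctrl e chi f (Suc k) u =
    (if 0 < reach E u * node_val m E chi u
     then E u * node_val m E chi (u @ [True]) / node_val m E chi u
     else f (Suc k) u)"
proof -
  have "prob_ev m E (\<lambda>l. prefix u l \<and> chi l) = reach E u * node_val m E chi u"
    using prob_ev_prefix[of u m E chi] assms by simp
  moreover have "prob_ev m E (\<lambda>l. prefix (u @ [True]) l \<and> chi l)
      = reach E u * (E u * node_val m E chi (u @ [True]))"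
    using prob_ev_prefix[of "u @ [True]" m E chi] assms by (simp add: reach_snoc edge_def)
  ultimately show ?thesis
    using assms by (auto simp: edgesA.simps(2) bc_step_def Let_def E_def)
qed

lemma edge_edgesA_Suc:
  fixes m k :: nat and e :: "bool list \<Rightarrow> real" and chi f
  assumes "ctrl u" "length u < m"
  defines "E \<equiv> edgesA m ctrl e chi f k"
  assumes "0 < reach E u" "0 < node_val m E chi u"
  shows "edge (edgesA m ctrl e chi f (Suc k)) u b * node_val m E chi u = edge E u b * node_val m E chi (u @ [b])"
proof -
  have F: "edgesA m ctrl e chi f (Suc k) u = E u * node_val m E chi (u @ [True]) / node_val m E chi u"
    using assms edgesA_Suc_attacker[where ctrl = ctrl and k = k and e = e and chi = chi and f = f, OF assms(1,2)]
    by simp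
  show ?thesis
  proof (cases b)
    case False
    have "(1 - E u * node_val m E chi (u @ [True]) / node_val m E chi u) * node_val m E chi u
        = node_val m E chi u - E u * node_val m E chi (u @ [True])"
      using assms(5) by (simp add: field_simps)
    also have "\<dots> = (1 - E u) * node_val m E chi (u @ [False])"
      using node_val_node[OF assms(2), of E chi] by simp
    finally show ?thesis
      using False by (simp add: edge_def F)
  qed (use assms(5) in \<open>simp add: edge_def F\<close>)
qed

lemma node_val_edgesA_Suc_mult:
  fixes m k :: nat and e :: "bool list \<Rightarrow> real" and chi f
  assumes "ctrl u" "length u < m"
  defines "E \<equiv> edgesA m ctrl e chi f k" and "F \<equiv> edgesA m ctrl e chi f (Suc k)"
  assumes "0 < reach E u" "0 < node_val m E chi u"
  shows "node_val m F chi u * node_val m E chi u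
       = E u * node_val m E chi (u @ [True]) * node_val m F chi (u @ [True])
         + (1 - E u) * node_val m E chi (u @ [False]) * node_val m F chi (u @ [False])"
proof -
  have "edge F u b * node_val m E chi u = edge E u b * node_val m E chi (u @ [b])" for b
    using edge_edgesA_Suc[where ctrl = ctrl, OF assms(1,2)] assms(5,6) by (simp add: E_def F_def)
  from this[of True] this[of False]
  have up: "F u * node_val m E chi u = E u * node_val m E chi (u @ [True])"
    and down: "(1 - F u) * node_val m E chi u = (1 - E u) * node_val m E chi (u @ [False])"
    by (simp_all only: edge_def if_True if_False)
  have "node_val m F chi u * node_val m E chi u
      = (F u * node_val m E chi u) * node_val m F chi (u @ [True])
        + ((1 - F u) * node_val m E chi u) * node_val m F chi (u @ [False])"
    unfolding node_val_node[OF assms(2), of F] by (simp add: algebra_simps)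
  then show ?thesis
    unfolding up down .
qed

text \<open>Cauchy-Schwarz: with node_val_edgesA_Suc_mult, reweighting the edges by the values of the children
  cannot lower the value.\<close>

lemma square_mean_le_reweighted:
  fixes p v1 v0 w1 w0 :: real
  assumes p: "0 \<le> p" "p \<le> 1" and v: "0 \<le> v1" "0 \<le> v0"
    and w1: "p * v1 \<le> p * w1" and w0: "(1 - p) * v0 \<le> (1 - p) * w0"
  shows "(p * v1 + (1 - p) * v0) ^ 2 \<le> p * v1 * w1 + (1 - p) * v0 * w0"
proof -
  have "(p * v1 + (1 - p) * v0) ^ 2 = p * v1 * v1 + (1 - p) * v0 * v0 - p * (1 - p) * (v1 - v0) ^ 2"
    by (simp add: power2_eq_square algebra_simps)
  also have "\<dots> \<le> p * v1 * v1 + (1 - p) * v0 * v0"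
    using p by simp
  also have "\<dots> \<le> p * v1 * w1 + (1 - p) * v0 * w0"
    using mult_right_mono[OF w1 v(1)] mult_right_mono[OF w0 v(2)] by (simp add: algebra_simps)
  finally show ?thesis .
qed

definition prob_valued :: "(nat \<Rightarrow> bool list \<Rightarrow> real) \<Rightarrow> bool" where
  "prob_valued f \<longleftrightarrow> (\<forall>i u. 0 \<le> f i u \<and> f i u \<le> 1)"

definition val_prod :: "nat \<Rightarrow> nat \<Rightarrow> (bool list \<Rightarrow> bool) \<Rightarrow> (bool list \<Rightarrow> real) \<Rightarrow> (bool list \<Rightarrow> bool)
    \<Rightarrow> (nat \<Rightarrow> bool list \<Rightarrow> real) \<Rightarrow> bool list \<Rightarrow> real" where
  "val_prod n m ctrl e chi f u = (\<Prod>k<n. node_val m (edgesA m ctrl e chi f k) chi u)"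

text \<open>The attackers fall back on the arbitrary values fA, fB only at nodes they reach with probability 0,
  so the invariant is established only at nodes reached by all the attackers considered.\<close>

definition reached_by_all :: "nat \<Rightarrow> nat \<Rightarrow> (bool list \<Rightarrow> bool) \<Rightarrow> (bool list \<Rightarrow> real) \<Rightarrow> (bool list \<Rightarrow> bool)
    \<Rightarrow> (nat \<Rightarrow> bool list \<Rightarrow> real) \<Rightarrow> bool list \<Rightarrow> bool" where
  "reached_by_all n m ctrl e chi f u \<longleftrightarrow> (\<forall>k<n. 0 < reach (edgesA m ctrl e chi f k) u)"

lemma val_prod_other_node:
  assumes "\<not> ctrl u" "length u < m"
  shows "val_prod n m ctrl e chi f u = (\<Prod>k<n. e u * node_val m (edgesA m ctrl e chi f k) chi (u @ [True])
                                          + (1 - e u) * node_val m (edgesA m ctrl e chi f k) chi (u @ [False]))"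
  using assms by (simp add: val_prod_def node_val_node edgesA_other)

context
  fixes m :: nat and e :: "bool list \<Rightarrow> real"
  assumes wf: "wf_protocol m e"
begin

lemma wf_protocol_edgesA:
  assumes f: "prob_valued f"
  shows "wf_protocol m (edgesA m ctrl e chi f k)"
proof (induction k)
  case 0
  then show ?case using wf by simp
next
  case (Suc k)
  let ?E = "edgesA m ctrl e chi f k"
  show ?case unfolding wf_protocol_def
  proof (intro allI impI)
    fix u :: "bool list" assume u: "length u < m"
    have E: "0 \<le> ?E u" "?E u \<le> 1" and V: "\<And>v. 0 \<le> node_val m ?E chi v \<and> node_val m ?E chi v \<le> 1"
      using Suc u node_val_unit_interval[OF Suc] by (auto simp: wf_protocol_def)
    have "?E u * node_val m ?E chi (u @ [True]) \<le> node_val m ?E chi u"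
      using node_val_node[OF u, of ?E chi] E V[of "u @ [False]"] by simp
    then show "0 \<le> edgesA m ctrl e chi f (Suc k) u \<and> edgesA m ctrl e chi f (Suc k) u \<le> 1"
      using u wf f E V[of u] V[of "u @ [True]"]
      by (cases "ctrl u")
        (auto simp: edgesA_other edgesA_Suc_attacker wf_protocol_def prob_valued_def zero_less_mult_iff)
  qed
qed

lemma node_val_edgesA_Suc_ge_of_children:
  assumes f: "prob_valued f" and u: "length u < m" "0 < reach (edgesA m ctrl e chi f k) u"
  defines "E \<equiv> edgesA m ctrl e chi f k" and "F \<equiv> edgesA m ctrl e chi f (Suc k)"
  assumes child: "\<And>b. edge E u b * node_val m E chi (u @ [b]) \<le> edge E u b * node_val m F chi (u @ [b])"
  shows "node_val m E chi u \<le> node_val m F chi u"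
proof -
  define v V W where "v = node_val m E chi u"
    and "V b = node_val m E chi (u @ [b])" and "W b = node_val m F chi (u @ [b])" for b
  have wfE: "wf_protocol m E" and wfF: "wf_protocol m F"
    using wf_protocol_edgesA[OF f] by (auto simp: E_def F_def)
  have V: "0 \<le> V b" for b
    using node_val_unit_interval[OF wfE] by (simp add: V_def)
  have E: "0 \<le> E u" "E u \<le> 1"
    using wfE u(1) by (auto simp: wf_protocol_def)
  have v: "v = E u * V True + (1 - E u) * V False"
    unfolding v_def V_def by (rule node_val_node[OF u(1)])
  show ?thesis
  proof (cases "ctrl u \<and> 0 < v")
    case True
    have "node_val m F chi u * v = E u * V True * W True + (1 - E u) * V False * W False"
      using node_val_edgesA_Suc_mult[where ctrl = ctrl and k = k and f = f and chi = chi, OF _ u(1)]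
        True u(2) by (simp add: v_def V_def W_def E_def F_def)
    moreover have "v * v \<le> E u * V True * W True + (1 - E u) * V False * W False"
      using square_mean_le_reweighted[OF E V[of True] V[of False]] child[where b = True] child[where b = False]
      unfolding v by (simp add: edge_def power2_eq_square V_def W_def)
    ultimately have "v * v \<le> node_val m F chi u * v"
      by simp
    then show ?thesis
      using True by (simp add: v_def)
  next
    case False
    then have "v \<le> 0 \<or> F u = E u"
      by (auto simp: edgesA_other E_def F_def)
    then show ?thesis
      using node_val_unit_interval[OF wfF, of chi u] child[where b = True] child[where b = False] v node_val_node[OF u(1), of F chi]
      by (auto simp: v_def V_def edge_def)
  qed
qed

lemma node_val_edgesA_Suc_ge:
  assumes f: "prob_valued f" and "length u \<le> m" and "0 < reach (edgesA m ctrl e chi f k) u"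
  shows "node_val m (edgesA m ctrl e chi f k) chi u \<le> node_val m (edgesA m ctrl e chi f (Suc k)) chi u"
  using assms(2,3)
proof (induction u rule: tree_induct[where m = m])
  case (leaf u)
  then show ?case by (simp add: node_val_leaf)
next
  case (node u)
  let ?E = "edgesA m ctrl e chi f k" and ?F = "edgesA m ctrl e chi f (Suc k)"
  have "edge ?E u b * node_val m ?E chi (u @ [b]) \<le> edge ?E u b * node_val m ?F chi (u @ [b])" for b
  proof (cases "edge ?E u b = 0")
    case False
    then have "0 < edge ?E u b"
      using edge_unit_interval[OF wf_protocol_edgesA[OF f, of ctrl chi k] node(1), of b] by linarith
    then have "node_val m ?E chi (u @ [b]) \<le> node_val m ?F chi (u @ [b])"
      using node(1-3,5) by (cases b) (simp_all add: reach_snoc)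
    then show ?thesis
      using \<open>0 < edge ?E u b\<close> by (simp add: mult_left_mono)
  qed simp
  then show ?case
    by (rule node_val_edgesA_Suc_ge_of_children[OF f node(1,5)])
qed

lemma node_val_edgesA_mono:
  assumes f: "prob_valued f" and "length u \<le> m" and "j \<le> k"
    and reach: "\<And>i. i < k \<Longrightarrow> 0 < reach (edgesA m ctrl e chi f i) u"
  shows "node_val m (edgesA m ctrl e chi f j) chi u \<le> node_val m (edgesA m ctrl e chi f k) chi u"
  using \<open>j \<le> k\<close> reach
proof (induction k)
  case (Suc k)
  then show ?case
    using node_val_edgesA_Suc_ge[OF f \<open>length u \<le> m\<close>, of ctrl chi k]
    by (cases "j = Suc k") (auto intro: order_trans)
qed simp

lemma val_prod_unit_interval:
  assumes "prob_valued f"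
  shows "0 \<le> val_prod n m ctrl e chi f u \<and> val_prod n m ctrl e chi f u \<le> 1"
  using node_val_unit_interval[OF wf_protocol_edgesA[OF assms]]
  unfolding val_prod_def by (auto intro: prod_nonneg prod_le_1)

lemma edge_edgesA_mult_val_prod:
  assumes "ctrl u" "length u < m"
    and pos: "\<And>k. k < N \<Longrightarrow> 0 < reach (edgesA m ctrl e chi f k) u \<and> 0 < node_val m (edgesA m ctrl e chi f k) chi u"
  shows "edge (edgesA m ctrl e chi f N) u b * val_prod N m ctrl e chi f u
       = edge e u b * val_prod N m ctrl e chi f (u @ [b])"
  using pos
proof (induction N)
  case 0
  then show ?case by (simp add: val_prod_def)
next
  case (Suc N)
  let ?E = "edgesA m ctrl e chi f N"
  have "edge (edgesA m ctrl e chi f (Suc N)) u b * val_prod (Suc N) m ctrl e chi f u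
      = (edge (edgesA m ctrl e chi f (Suc N)) u b * node_val m ?E chi u) * val_prod N m ctrl e chi f u"
    by (simp add: val_prod_def)
  also have "\<dots> = (edge ?E u b * val_prod N m ctrl e chi f u) * node_val m ?E chi (u @ [b])"
    using edge_edgesA_Suc[where ctrl = ctrl, OF assms(1,2)] Suc.prems[of N] by simp
  also have "\<dots> = edge e u b * val_prod (Suc N) m ctrl e chi f (u @ [b])"
    using Suc by (simp add: val_prod_def)
  finally show ?case .
qed

lemma node_val_edgesA_ge:
  assumes "prob_valued f" "length u \<le> m" "reached_by_all n m ctrl e chi f u" "k < n"
  shows "node_val m e chi u \<le> node_val m (edgesA m ctrl e chi f k) chi u"
  using node_val_edgesA_mono[OF assms(1,2), of 0 k] assms(3,4) by (simp add: reached_by_all_def)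

lemma val_prod_node:
  assumes f: "prob_valued f" and u: "ctrl u" "length u < m"
    and reached: "reached_by_all n m ctrl e chi f u" and pos: "0 < node_val m e chi u"
  shows "val_prod n m ctrl e chi f u
       = e u * val_prod n m ctrl e chi f (u @ [True]) + (1 - e u) * val_prod n m ctrl e chi f (u @ [False])"
proof (cases n)
  case (Suc N)
  let ?E = "edgesA m ctrl e chi f N" and ?P = "val_prod N m ctrl e chi f"
  have "0 < reach (edgesA m ctrl e chi f k) u \<and> 0 < node_val m (edgesA m ctrl e chi f k) chi u"
    if "k < N" for k
    using node_val_edgesA_ge[OF f _ reached, of k] reached that pos u(2) Suc
    by (auto simp: reached_by_all_def)
  then have step: "edge ?E u b * ?P u = edge e u b * ?P (u @ [b])" for b
    by (rule edge_edgesA_mult_val_prod[where ctrl = ctrl, OF u])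
  have "val_prod n m ctrl e chi f u = ?P u * node_val m ?E chi u"
    using Suc by (simp add: val_prod_def)
  also have "\<dots> = (edge ?E u True * ?P u) * node_val m ?E chi (u @ [True])
        + (edge ?E u False * ?P u) * node_val m ?E chi (u @ [False])"
    unfolding node_val_node[OF u(2), of ?E chi] by (simp add: edge_def algebra_simps)
  also have "\<dots> = e u * val_prod n m ctrl e chi f (u @ [True]) + (1 - e u) * val_prod n m ctrl e chi f (u @ [False])"
    unfolding step using Suc by (simp add: val_prod_def edge_def)
  finally show ?thesis .
qed (simp add: val_prod_def)

lemma val_prod_eq_1:
  assumes "prob_valued f" "length u \<le> m" "reached_by_all n m ctrl e chi f u" "node_val m e chi u = 1"
  shows "val_prod n m ctrl e chi f u = 1"
proof -
  have "node_val m (edgesA m ctrl e chi f k) chi u = 1" if "k < n" for k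
    using node_val_edgesA_ge[OF assms(1-3) that] assms(4)
      node_val_unit_interval[OF wf_protocol_edgesA[OF assms(1)], of ctrl chi k chi u] by simp
  then show ?thesis by (simp add: val_prod_def)
qed

text \<open>If A^(k) is the first attacker that cuts the edge to the child, the product identity forces a
  vanishing value at the child for an earlier attacker, hence for the honest one.\<close>

lemma node_val_unreached_child:
  assumes f: "prob_valued f" and u: "ctrl u" "length u < m"
    and reached: "reached_by_all n m ctrl e chi f u" and pos: "0 < node_val m e chi u"
    and edge: "0 < edge e u b" and unreached: "\<not> reached_by_all n m ctrl e chi f (u @ [b])"
  shows "node_val m e chi (u @ [b]) = 0"
proof -
  let ?E = "edgesA m ctrl e chi f"
  obtain k' where k': "k' < n" "\<not> 0 < reach (?E k') (u @ [b])"
    using unreached by (auto simp: reached_by_all_def)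
  define k where "k = (LEAST k. \<not> 0 < reach (?E k) (u @ [b]))"
  have "\<not> 0 < reach (?E k) (u @ [b])" "k \<le> k'"
    unfolding k_def by (rule LeastI[of _ k'], rule k'(2), rule Least_le, rule k'(2))
  then have k: "k < n" "\<not> 0 < reach (?E k) (u @ [b])"
    using k'(1) by auto
  have before: "0 < reach (?E i) (u @ [b])" if "i < k" for i
    using not_less_Least[of i] that unfolding k_def by blast
  have prefix_pos: "0 < reach (?E i) u \<and> 0 < node_val m (?E i) chi u" if "i < k" for i
    using reached node_val_edgesA_ge[OF f _ reached, of i] pos that k(1) u(2)
    by (auto simp: reached_by_all_def)
  have "0 \<le> edge (?E k) u b" "0 < reach (?E k) u"
    using edge_unit_interval[OF wf_protocol_edgesA[OF f] u(2)] reached k(1)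
    by (auto simp: reached_by_all_def)
  then have "edge (?E k) u b = 0"
    using k(2) by (simp add: reach_snoc zero_less_mult_iff)
  then have "val_prod k m ctrl e chi f (u @ [b]) = 0"
    using edge_edgesA_mult_val_prod[where ctrl = ctrl and b = b and N = k, OF u prefix_pos] edge by simp
  then obtain j where "j < k" "node_val m (?E j) chi (u @ [b]) = 0"
    by (auto simp: val_prod_def)
  moreover have "node_val m (?E 0) chi (u @ [b]) \<le> node_val m (?E j) chi (u @ [b])"
    using \<open>j < k\<close> u(2) before by (intro node_val_edgesA_mono[OF f]) auto
  ultimately show ?thesis
    using node_val_unit_interval[OF wf, of chi "u @ [b]"] by simp
qed

section \<open>The region invariant\<close>

lemma gam_region_child:
  assumes fA: "prob_valued fA" and fB: "prob_valued fB" and n: "0 < n" and u: "ctrl u" "length u < m"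
    and reachedA: "reached_by_all n m ctrl e chi fA u"
    and reachedB: "reached_by_all n m (\<lambda>u. \<not> ctrl u) e (\<lambda>l. \<not> chi l) fB u"
    and pos: "0 < node_val m e chi u" and edge: "0 < edge e u b"
    and IH: "reached_by_all n m ctrl e chi fA (u @ [b]) \<Longrightarrow>
      reached_by_all n m (\<lambda>u. \<not> ctrl u) e (\<lambda>l. \<not> chi l) fB (u @ [b]) \<Longrightarrow>
      gam_region n (val_prod n m ctrl e chi fA (u @ [b])) (val_prod n m (\<lambda>u. \<not> ctrl u) e (\<lambda>l. \<not> chi l) fB (u @ [b]))"
  shows "gam_region n (val_prod n m ctrl e chi fA (u @ [b])) (val_prod n m (\<lambda>u. \<not> ctrl u) e (\<lambda>l. \<not> chi l) fB (u @ [b]))"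
proof -
  have reachedB': "reached_by_all n m (\<lambda>u. \<not> ctrl u) e (\<lambda>l. \<not> chi l) fB (u @ [b])"
    using reachedB edge u(1) by (auto simp: reached_by_all_def reach_snoc edge_def edgesA_other)
  show ?thesis
  proof (cases "reached_by_all n m ctrl e chi fA (u @ [b])")
    case True
    then show ?thesis using IH reachedB' by blast
  next
    case False
    then have "node_val m e chi (u @ [b]) = 0"
      using node_val_unreached_child[OF fA u reachedA pos edge] by blast
    then have "val_prod n m (\<lambda>u. \<not> ctrl u) e (\<lambda>l. \<not> chi l) fB (u @ [b]) = 1"
      using val_prod_eq_1[OF fB _ reachedB'] u(2) by (simp add: node_val_not)
    then show ?thesis
      using gam_region_one_right[OF n] val_prod_unit_interval[OF fA] by simp
  qed
qed

lemma gam_region_attacker_node: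
  assumes fA: "prob_valued fA" and fB: "prob_valued fB" and n: "0 < n" and u: "ctrl u" "length u < m"
    and reachedA: "reached_by_all n m ctrl e chi fA u"
    and reachedB: "reached_by_all n m (\<lambda>u. \<not> ctrl u) e (\<lambda>l. \<not> chi l) fB u"
    and IH: "\<And>b. reached_by_all n m ctrl e chi fA (u @ [b]) \<Longrightarrow>
      reached_by_all n m (\<lambda>u. \<not> ctrl u) e (\<lambda>l. \<not> chi l) fB (u @ [b]) \<Longrightarrow>
      gam_region n (val_prod n m ctrl e chi fA (u @ [b])) (val_prod n m (\<lambda>u. \<not> ctrl u) e (\<lambda>l. \<not> chi l) fB (u @ [b]))"
  shows "gam_region n (val_prod n m ctrl e chi fA u) (val_prod n m (\<lambda>u. \<not> ctrl u) e (\<lambda>l. \<not> chi l) fB u)"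
proof -
  let ?P = "val_prod n m ctrl e chi fA" and ?Q = "val_prod n m (\<lambda>u. \<not> ctrl u) e (\<lambda>l. \<not> chi l) fB"
  let ?F = "edgesA m (\<lambda>u. \<not> ctrl u) e (\<lambda>l. \<not> chi l) fB"
  have P: "0 \<le> ?P v \<and> ?P v \<le> 1" and Q: "0 \<le> ?Q v \<and> ?Q v \<le> 1" for v
    using val_prod_unit_interval[OF fA] val_prod_unit_interval[OF fB] by blast+
  consider "node_val m e chi u = 0" | "node_val m e chi u = 1" | "0 < node_val m e chi u" "node_val m e chi u < 1"
    using node_val_unit_interval[OF wf, of chi u] by linarith
  then show ?thesis
  proof cases
    case 1
    then have "?Q u = 1"
      using val_prod_eq_1[OF fB _ reachedB] u(2) by (simp add: node_val_not)
    then show ?thesis using gam_region_one_right[OF n] P by simp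
  next
    case 2
    then have "?P u = 1"
      using val_prod_eq_1[OF fA _ reachedA] u(2) by simp
    then show ?thesis using gam_region_one_left[OF n] Q by simp
  next
    case 3
    have child: "gam_region n (?P (u @ [b])) (?Q (u @ [b]))" if "0 < edge e u b" for b
      by (rule gam_region_child[OF fA fB n u reachedA reachedB 3(1) that IH])
    have "?P u = e u * ?P (u @ [True]) + (1 - e u) * ?P (u @ [False])"
      by (rule val_prod_node[OF fA u reachedA 3(1)])
    moreover have "?Q u = (\<Prod>k<n. e u * node_val m (?F k) (\<lambda>l. \<not> chi l) (u @ [True])
                               + (1 - e u) * node_val m (?F k) (\<lambda>l. \<not> chi l) (u @ [False]))"
      using u by (simp add: val_prod_other_node)
    moreover have "0 \<le> e u" "e u \<le> 1"
      using wf u(2) by (auto simp: wf_protocol_def)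
    ultimately show ?thesis
      using child[of True] child[of False] gam_region_mix[OF n, of "e u"]
        node_val_unit_interval[OF wf_protocol_edgesA[OF fB]]
      by (cases "e u = 0 \<or> e u = 1") (auto simp: edge_def val_prod_def)
  qed
qed

lemma gam_region_val_prod:
  assumes "prob_valued fA" "prob_valued fB" "0 < n" "length u \<le> m"
    and "reached_by_all n m ctrl e chi fA u" "reached_by_all n m (\<lambda>u. \<not> ctrl u) e (\<lambda>l. \<not> chi l) fB u"
  shows "gam_region n (val_prod n m ctrl e chi fA u) (val_prod n m (\<lambda>u. \<not> ctrl u) e (\<lambda>l. \<not> chi l) fB u)"
  using assms
proof (induction u arbitrary: ctrl chi fA fB rule: tree_induct[where m = m])
  case (leaf u)
  then show ?case
    using gam_region_one_left[OF leaf(4), of 0] gam_region_one_right[OF leaf(4), of 0]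
    by (simp add: val_prod_def node_val_leaf power_0_left)
next
  case (node u)
  have IH: "gam_region n (val_prod n m ctrl' e chi' fA' (u @ [b]))
      (val_prod n m (\<lambda>u. \<not> ctrl' u) e (\<lambda>l. \<not> chi' l) fB' (u @ [b]))"
    if "prob_valued fA'" "prob_valued fB'" "reached_by_all n m ctrl' e chi' fA' (u @ [b])"
      "reached_by_all n m (\<lambda>u. \<not> ctrl' u) e (\<lambda>l. \<not> chi' l) fB' (u @ [b])" for b ctrl' chi' fA' fB'
    using node(1-3,6) that by (cases b) simp_all
  show ?case
  proof (cases "ctrl u")
    case True
    show ?thesis
      by (rule gam_region_attacker_node[OF node(4-6) True node(1) node(8,9)]) (use node IH in simp)
  next
    case False
    have "gam_region n (val_prod n m (\<lambda>u. \<not> ctrl u) e (\<lambda>l. \<not> chi l) fB u)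
        (val_prod n m (\<lambda>u. \<not> \<not> ctrl u) e (\<lambda>l. \<not> \<not> chi l) fA u)"
      by (rule gam_region_attacker_node[OF node(5,4,6) _ node(1) node(9)]) (use False node IH[of fB fA "\<lambda>u. \<not> ctrl u" "\<lambda>l. \<not> chi l"] in simp_all)
    then show ?thesis
      using gam_region_sym[OF node(6)] by simp
  qed
qed

lemma val_prod_le_power:
  assumes f: "prob_valued f" and "length u \<le> m" and reached: "reached_by_all (Suc k) m ctrl e chi f u"
    and top: "node_val m (edgesA m ctrl e chi f k) chi u \<le> t"
  shows "val_prod (Suc k) m ctrl e chi f u \<le> t ^ Suc k"
proof -
  have "node_val m (edgesA m ctrl e chi f i) chi u \<le> node_val m (edgesA m ctrl e chi f k) chi u"
    if "i < Suc k" for i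
    using reached that by (intro node_val_edgesA_mono[OF f \<open>length u \<le> m\<close>]) (auto simp: reached_by_all_def)
  then have "0 \<le> node_val m (edgesA m ctrl e chi f i) chi u \<and> node_val m (edgesA m ctrl e chi f i) chi u \<le> t"
    if "i < Suc k" for i
    using node_val_unit_interval[OF wf_protocol_edgesA[OF f]] top that by (meson order_trans)
  then have "val_prod (Suc k) m ctrl e chi f u \<le> (\<Prod>i<Suc k. t)"
    unfolding val_prod_def by (intro prod_mono) simp
  then show ?thesis by simp
qed

end

lemma one_minus_power_mult_lt_1:
  fixes \<epsilon> :: real
  assumes \<epsilon>: "0 < \<epsilon>" "\<epsilon> \<le> 1/2"
    and n: "5 * ln (1 / \<epsilon>) / \<epsilon> \<le> real n" "real n \<le> 5 * ln (1 / \<epsilon>) / \<epsilon> + 1"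
  shows "(1 - \<epsilon>) ^ n * (real n + 1) < 1"
proof -
  define L where "L = ln (1 / \<epsilon>)"
  have L: "0 \<le> L" "L \<le> 1 / \<epsilon>"
    using \<epsilon> ln_le_minus_one[of "1 / \<epsilon>"] by (auto simp: L_def)
  have "(1 - \<epsilon>) ^ n \<le> exp (- \<epsilon>) ^ n"
    using \<epsilon> exp_ge_add_one_self[of "- \<epsilon>"] by (intro power_mono) auto
  also have "\<dots> = exp (- (\<epsilon> * real n))"
    by (simp add: exp_of_nat_mult[symmetric] mult.commute)
  also have "\<dots> \<le> exp (- (5 * L))"
    using n(1) \<epsilon> by (simp add: L_def field_simps)
  also have "- (5 * L) = ln (\<epsilon> ^ 5)"
    using \<epsilon> by (simp add: L_def ln_div ln_realpow)
  also have "exp (ln (\<epsilon> ^ 5)) = \<epsilon> ^ 5"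
    using \<epsilon> by simp
  finally have "(1 - \<epsilon>) ^ n * (real n + 1) \<le> \<epsilon> ^ 5 * (5 * L / \<epsilon> + 2)"
    using n(2) \<epsilon> by (intro mult_mono) (auto simp: L_def)
  also have "\<dots> \<le> \<epsilon> ^ 5 * (5 / \<epsilon> ^ 2 + 2)"
    using L \<epsilon> by (intro mult_left_mono add_right_mono) (auto simp: field_simps power2_eq_square)
  also have "\<dots> = 5 * \<epsilon> ^ 3 + 2 * \<epsilon> ^ 5"
    using \<epsilon> by (simp add: field_simps power2_eq_square power_numeral_reduce)
  also have "\<dots> \<le> 5 * (1/2) ^ 3 + 2 * (1/2) ^ 5"
    using \<epsilon> by (intro add_mono mult_left_mono power_mono) auto
  also have "\<dots> < 1"
    by (simp add: power_divide)
  finally show ?thesis .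
qed

lemma ex_kappa_one_minus_power_mult_lt_1:
  fixes \<epsilon> :: real
  assumes "0 < \<epsilon>" "\<epsilon> \<le> 1/2"
  shows "\<exists>\<kappa>::nat. real \<kappa> \<le> 5 * (1 / \<epsilon>) * ln (1 / \<epsilon>) \<and> (1 - \<epsilon>) ^ Suc \<kappa> * (real (Suc \<kappa>) + 1) < 1"
proof -
  define y where "y = 5 * ln (1 / \<epsilon>) / \<epsilon>"
  define \<kappa> where "\<kappa> = nat \<lfloor>y\<rfloor>"
  have "0 \<le> y" using assms by (simp add: y_def)
  then have \<kappa>: "real \<kappa> \<le> y" "y \<le> real (Suc \<kappa>)" "real (Suc \<kappa>) \<le> y + 1"
    unfolding \<kappa>_def by linarith+
  show ?thesis
  proof (intro exI conjI)
    show "real \<kappa> \<le> 5 * (1 / \<epsilon>) * ln (1 / \<epsilon>)"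
      using \<kappa>(1) by (simp add: y_def)
    show "(1 - \<epsilon>) ^ Suc \<kappa> * (real (Suc \<kappa>) + 1) < 1"
      using one_minus_power_mult_lt_1[OF assms \<kappa>(2,3)[unfolded y_def]] .
  qed
qed

lemma attack_dichotomy:
  assumes wf: "wf_protocol m e" and fA: "prob_valued fA" and fB: "prob_valued fB"
    and small: "(1 - \<epsilon>) ^ Suc \<kappa> * (real (Suc \<kappa>) + 1) < 1"
  shows "val m (edgesA m ctrl e chi fA \<kappa>) chi > 1 - \<epsilon> \<or> val m (edgesB m ctrl e chi fB \<kappa>) chi < \<epsilon>"
proof -
  let ?n = "Suc \<kappa>" and ?ctrl' = "\<lambda>u. \<not> ctrl u" and ?chi' = "\<lambda>l. \<not> chi l"
  have "gam_region ?n (val_prod ?n m ctrl e chi fA []) (val_prod ?n m ?ctrl' e ?chi' fB [])"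
    by (rule gam_region_val_prod[OF wf fA fB]) (simp_all add: reached_by_all_def)
  then have threshold:
    "1 / (real ?n + 1) \<le> val_prod ?n m ctrl e chi fA [] \<or> 1 / (real ?n + 1) \<le> val_prod ?n m ?ctrl' e ?chi' fB []"
    by (rule gam_region_threshold[rotated]) simp
  have "(1 - \<epsilon>) ^ ?n < 1 / (real ?n + 1)"
    using small by (subst pos_less_divide_eq) auto
  show ?thesis
  proof (rule ccontr)
    assume "\<not> ?thesis"
    then have "val_prod ?n m ctrl e chi fA [] \<le> (1 - \<epsilon>) ^ ?n" "val_prod ?n m ?ctrl' e ?chi' fB [] \<le> (1 - \<epsilon>) ^ ?n"
      using val_prod_le_power[OF wf fA, where u = "[]" and ctrl = ctrl and chi = chi and k = \<kappa>]
        val_prod_le_power[OF wf fB, where u = "[]" and ctrl = ?ctrl' and chi = ?chi' and k = \<kappa>]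
      by (simp_all add: reached_by_all_def val_eq_node_val edgesB_eq_edgesA_dual node_val_not)
    with threshold \<open>(1 - \<epsilon>) ^ ?n < 1 / (real ?n + 1)\<close> show False
      by linarith
  qed
qed

theorem theorem3p3:
  shows "\<exists>(c::real) (d::nat). \<forall>\<epsilon>::real. 0 < \<epsilon> \<and> \<epsilon> \<le> 1/2 \<longrightarrow>
     (\<exists>\<kappa>::nat. real \<kappa> \<le> c * (1/\<epsilon>) * (ln (1/\<epsilon>)) ^ d \<and>
        (\<forall>(m::nat) (ctrl::bool list \<Rightarrow> bool) (e::bool list \<Rightarrow> real) (chi::bool list \<Rightarrow> bool)
            (fA::nat \<Rightarrow> bool list \<Rightarrow> real) (fB::nat \<Rightarrow> bool list \<Rightarrow> real).
           wf_protocol m e \<longrightarrow>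
           (\<forall>i u. 0 \<le> fA i u \<and> fA i u \<le> 1 \<and> 0 \<le> fB i u \<and> fB i u \<le> 1) \<longrightarrow>
           val m (edgesA m ctrl e chi fA \<kappa>) chi > 1 - \<epsilon> \<or>
           val m (edgesB m ctrl e chi fB \<kappa>) chi < \<epsilon>))"
proof (rule exI[of _ 5], rule exI[of _ 1], intro allI impI, goal_cases)
  case (1 \<epsilon>)
  then obtain \<kappa> :: nat where "real \<kappa> \<le> 5 * (1 / \<epsilon>) * ln (1 / \<epsilon>) ^ 1"
    and "(1 - \<epsilon>) ^ Suc \<kappa> * (real (Suc \<kappa>) + 1) < 1"
    using ex_kappa_one_minus_power_mult_lt_1 by auto
  then show ?case
    using attack_dichotomy unfolding prob_valued_def by blast
qed

end
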